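(* Let $M$ be a matroid of rank $d$, viewed as its collection of independent sets, and for $0\le i\le d$ let $f_i$ be the number of $i$-element independent sets of $M$. If $M$ has no coloops, then for every $0\le k\le d$, $$0\le \sum_{i=k}^{d}\binom{i}{k}(-2)^{d-i}f_i.$$
   Context: A coloop of a matroid is an element contained in every basis. *)

theory Defs
  imports Main
begin

definition matroid :: "'a set \<Rightarrow> 'a set set \<Rightarrow> bool" where
  "matroid E \<I> \<longleftrightarrow> finite E \<and> \<I> \<subseteq> Pow E \<and> {} \<in> \<I>
     \<and> (\<forall>A B. A \<in> \<I> \<and> B \<subseteq> A \<longrightarrow> B \<in> \<I>)
     \<and> (\<forall>A B. A \<in> \<I> \<and> B \<in> \<I> \<and> card A < card B \<longrightarrow> (\<exists>x\<in>B - A. insert x A \<in> \<I>))"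

definition basis :: "'a set set \<Rightarrow> 'a set \<Rightarrow> bool" where
  "basis \<I> B \<longleftrightarrow> B \<in> \<I> \<and> (\<forall>A\<in>\<I>. B \<subseteq> A \<longrightarrow> A = B)"

definition mrank :: "'a set set \<Rightarrow> nat" where
  "mrank \<I> = Max (card ` \<I>)"

definition coloop :: "'a set \<Rightarrow> 'a set set \<Rightarrow> 'a \<Rightarrow> bool" where
  "coloop E \<I> e \<longleftrightarrow> e \<in> E \<and> (\<forall>B. basis \<I> B \<longrightarrow> e \<in> B)"

definition fvec :: "'a set set \<Rightarrow> nat \<Rightarrow> nat" where
  "fvec \<I> i = card {A \<in> \<I>. card A = i}"

end

theory Submission
  imports Defs
begin

(* Let P(x) be the sum of x^(d - |A|) over the independent sets A of a matroid of rank d.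
   Double counting the pairs X <= A of independent sets with |X| = k turns the sum in the theorem
   into the sum of the polynomials P of the contractions M / X at x = -2, and contracting an
   independent set preserves coloop-freeness; so it suffices to show P(-2) >= 0 for coloop-free
   matroids. By deletion-contraction P_M = P_(M - e) + P_(M / e), and induction applies to both terms
   unless M - e has a coloop f. In that case {e, f} is a series pair, and expanding once more gives
   P_M = (x + 2) P_(M - e - f) + P_(M / {e, f}), whose first term vanishes at x = -2. *)

lemma matroid_finite_ground: "matroid E I \<Longrightarrow> finite E"
  unfolding matroid_def by blast

lemma matroid_indeps_subset_Pow: "matroid E I \<Longrightarrow> I \<subseteq> Pow E"
  unfolding matroid_def by blast

lemma matroid_indep_finite: "matroid E I \<Longrightarrow> A \<in> I \<Longrightarrow> finite A"
  unfolding matroid_def by (meson PowD finite_subset subsetD)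

lemma matroid_finite_indeps: "matroid E I \<Longrightarrow> finite I"
  unfolding matroid_def by (meson finite_Pow_iff finite_subset)

lemma matroid_empty_indep: "matroid E I \<Longrightarrow> {} \<in> I"
  unfolding matroid_def by blast

lemma matroid_subset_indep: "matroid E I \<Longrightarrow> A \<in> I \<Longrightarrow> B \<subseteq> A \<Longrightarrow> B \<in> I"
  unfolding matroid_def by blast

lemma matroid_augment:
  "matroid E I \<Longrightarrow> A \<in> I \<Longrightarrow> B \<in> I \<Longrightarrow> card A < card B \<Longrightarrow> \<exists>x\<in>B - A. insert x A \<in> I"
  unfolding matroid_def by blast

lemma card_le_mrank: "matroid E I \<Longrightarrow> A \<in> I \<Longrightarrow> card A \<le> mrank I"
  unfolding mrank_def by (simp add: matroid_finite_indeps)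

lemma mrank_attained:
  assumes "matroid E I"
  shows "\<exists>B\<in>I. card B = mrank I"
proof -
  have "Max (card ` I) \<in> card ` I"
    using matroid_finite_indeps[OF assms] matroid_empty_indep[OF assms] by (intro Max_in) auto
  then show ?thesis unfolding mrank_def by auto
qed

lemma mrank_eqI:
  "finite I \<Longrightarrow> B \<in> I \<Longrightarrow> card B = d \<Longrightarrow> (\<And>A. A \<in> I \<Longrightarrow> card A \<le> d) \<Longrightarrow> mrank I = d"
  unfolding mrank_def by (rule Max_eqI) auto

lemma indep_extend_to_max_within:
  assumes m: "matroid E I" and B: "B \<in> I" "card B = mrank I" and A: "A \<in> I"
  shows "\<exists>B'\<in>I. A \<subseteq> B' \<and> B' \<subseteq> A \<union> B \<and> card B' = mrank I"
  using A
proof (induction "mrank I - card A" arbitrary: A rule: less_induct)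
  case less
  show ?case
  proof (cases "card A < mrank I")
    case False
    with less.prems card_le_mrank[OF m] show ?thesis
      by (metis Un_upper1 order.antisym not_less order.refl)
  next
    case True
    then obtain x where x: "x \<in> B - A" "insert x A \<in> I"
      using matroid_augment[OF m less.prems B(1)] B(2) by auto
    then have "mrank I - card (insert x A) < mrank I - card A"
      using True matroid_indep_finite[OF m less.prems] by simp
    from less.hyps[OF this x(2)] x show ?thesis by blast
  qed
qed

lemma basis_iff_card_mrank: "matroid E I \<Longrightarrow> basis I B \<longleftrightarrow> B \<in> I \<and> card B = mrank I"
proof
  assume m: "matroid E I" and "basis I B"
  then have B: "B \<in> I" and max: "\<And>A. A \<in> I \<Longrightarrow> B \<subseteq> A \<Longrightarrow> A = B"
    unfolding basis_def by auto
  obtain B0 where "B0 \<in> I" "card B0 = mrank I" using mrank_attained[OF m] by blast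
  then obtain B' where "B' \<in> I" "B \<subseteq> B'" "card B' = mrank I"
    using indep_extend_to_max_within[OF m _ _ B] by blast
  with B max show "B \<in> I \<and> card B = mrank I" by metis
next
  assume m: "matroid E I" and "B \<in> I \<and> card B = mrank I"
  then show "basis I B"
    unfolding basis_def by (metis card_le_mrank card_seteq matroid_indep_finite)
qed

lemma coloop_iff: "matroid E I \<Longrightarrow> coloop E I e \<longleftrightarrow> e \<in> E \<and> (\<forall>B\<in>I. card B = mrank I \<longrightarrow> e \<in> B)"
  unfolding coloop_def by (auto simp: basis_iff_card_mrank)

definition deletion :: "'a set set \<Rightarrow> 'a \<Rightarrow> 'a set set" where
  "deletion I e = {A \<in> I. e \<notin> A}"

(* The contraction by an independent set X; for dependent X this is empty. *)
definition contraction :: "'a set set \<Rightarrow> 'a set \<Rightarrow> 'a set set" where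
  "contraction I X = {A. A \<inter> X = {} \<and> A \<union> X \<in> I}"

lemma matroid_deletion:
  assumes m: "matroid E I"
  shows "matroid (E - {e}) (deletion I e)"
proof -
  have "\<exists>x\<in>B - A. insert x A \<in> deletion I e"
    if "A \<in> deletion I e" "B \<in> deletion I e" "card A < card B" for A B
    using that matroid_augment[OF m, of A B] unfolding deletion_def by auto
  with m show ?thesis unfolding matroid_def deletion_def by auto
qed

lemma mrank_deletion:
  assumes m: "matroid E I" and e: "e \<in> E" "\<not> coloop E I e"
  shows "mrank (deletion I e) = mrank I"
proof -
  obtain B where "B \<in> I" "card B = mrank I" "e \<notin> B"
    using e coloop_iff[OF m] by blast
  then show ?thesis
    by (intro mrank_eqI[of _ B])
      (auto simp: deletion_def card_le_mrank[OF m] matroid_finite_indeps[OF m])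
qed

lemma contraction_subset_Pow: "I \<subseteq> Pow E \<Longrightarrow> contraction I X \<subseteq> Pow (E - X)"
  unfolding contraction_def by blast

lemma contraction_not_indep: "matroid E I \<Longrightarrow> X \<notin> I \<Longrightarrow> contraction I X = {}"
  unfolding contraction_def using matroid_subset_indep by blast

lemma card_Un_contraction:
  assumes "matroid E I" and "A \<in> contraction I X"
  shows "card (A \<union> X) = card A + card X"
proof -
  have "A \<inter> X = {}" "finite (A \<union> X)"
    using assms matroid_indep_finite unfolding contraction_def by auto
  then show ?thesis by (simp add: card_Un_disjoint)
qed

lemma Diff_mem_contraction: "B \<in> I \<Longrightarrow> X \<subseteq> B \<Longrightarrow> B - X \<in> contraction I X"
  unfolding contraction_def by (simp add: Un_absorb2 Diff_disjoint Int_commute)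

lemma matroid_contraction:
  assumes m: "matroid E I" and X: "X \<in> I"
  shows "matroid (E - X) (contraction I X)"
proof -
  have "\<exists>x\<in>B - A. insert x A \<in> contraction I X"
    if A: "A \<in> contraction I X" and B: "B \<in> contraction I X" and lt: "card A < card B" for A B
  proof -
    have "card (A \<union> X) < card (B \<union> X)"
      using lt card_Un_contraction[OF m A] card_Un_contraction[OF m B] by simp
    then obtain x where "x \<in> (B \<union> X) - (A \<union> X)" "insert x (A \<union> X) \<in> I"
      using A B matroid_augment[OF m] unfolding contraction_def by blast
    with A show ?thesis unfolding contraction_def by auto
  qed
  moreover have "C \<in> contraction I X" if "A \<in> contraction I X" "C \<subseteq> A" for A C
  proof -
    from that have "A \<union> X \<in> I" "C \<union> X \<subseteq> A \<union> X" "C \<inter> X = {}"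
      unfolding contraction_def by auto
    then show ?thesis
      using matroid_subset_indep[OF m, of "A \<union> X" "C \<union> X"] unfolding contraction_def by simp
  qed
  moreover have "{} \<in> contraction I X" using X by (simp add: contraction_def)
  moreover have "finite (E - X)" using matroid_finite_ground[OF m] by simp
  ultimately show ?thesis
    using contraction_subset_Pow[OF matroid_indeps_subset_Pow[OF m]] unfolding matroid_def by blast
qed

lemma mrank_contraction:
  assumes m: "matroid E I" and X: "X \<in> I"
  shows "mrank (contraction I X) = mrank I - card X"
proof -
  obtain B where "B \<in> I" "card B = mrank I" using mrank_attained[OF m] by blast
  then obtain B' where B': "B' \<in> I" "X \<subseteq> B'" "card B' = mrank I"
    using indep_extend_to_max_within[OF m _ _ X] by blast
  show ?thesis
  proof (rule mrank_eqI)
    show "finite (contraction I X)"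
      using matroid_contraction[OF m X] by (rule matroid_finite_indeps)
    show "B' - X \<in> contraction I X" using B'(1,2) by (rule Diff_mem_contraction)
    show "card (B' - X) = mrank I - card X"
      using B' by (simp add: card_Diff_subset matroid_indep_finite[OF m X])
    show "card A \<le> mrank I - card X" if "A \<in> contraction I X" for A
      using card_Un_contraction[OF m that] card_le_mrank[OF m, of "A \<union> X"] that
      unfolding contraction_def by simp
  qed
qed

lemma contraction_no_coloop:
  assumes m: "matroid E I" and X: "X \<in> I" and nc: "\<forall>e\<in>E. \<not> coloop E I e"
  shows "\<forall>e\<in>E - X. \<not> coloop (E - X) (contraction I X) e"
proof
  fix e assume e: "e \<in> E - X"
  then have "\<not> coloop E I e" using nc by blast
  then obtain B where B: "B \<in> I" "card B = mrank I" "e \<notin> B"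
    using e by (auto simp: coloop_iff[OF m])
  then obtain B' where B': "B' \<in> I" "X \<subseteq> B'" "B' \<subseteq> X \<union> B" "card B' = mrank I"
    using indep_extend_to_max_within[OF m _ _ X] by blast
  have "B' - X \<in> contraction I X" using B' by (intro Diff_mem_contraction)
  moreover have "card (B' - X) = mrank (contraction I X)"
    using B' by (simp add: mrank_contraction[OF m X] card_Diff_subset matroid_indep_finite[OF m X])
  moreover have "e \<notin> B' - X" using B' B e by blast
  ultimately show "\<not> coloop (E - X) (contraction I X) e"
    unfolding coloop_iff[OF matroid_contraction[OF m X]] by blast
qed

definition fpoly :: "'a set set \<Rightarrow> nat \<Rightarrow> int \<Rightarrow> int" where
  "fpoly I d x = (\<Sum>A\<in>I. x ^ (d - card A))"

lemma fpoly_deletion_contraction: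
  assumes fE: "finite E" and I: "I \<subseteq> Pow E"
  shows "fpoly I d x = fpoly (deletion I e) d x + fpoly (contraction I {e}) (d - 1) x"
proof -
  have fI: "finite I" using fE I by (meson finite_Pow_iff finite_subset)
  have split: "I = deletion I e \<union> {A \<in> I. e \<in> A}"
    and disj: "deletion I e \<inter> {A \<in> I. e \<in> A} = {}"
    and fin: "finite (deletion I e)" "finite {A \<in> I. e \<in> A}"
    using fI unfolding deletion_def by auto
  have "fpoly I d x = fpoly (deletion I e) d x + (\<Sum>A | A \<in> I \<and> e \<in> A. x ^ (d - card A))"
    unfolding fpoly_def by (subst split, rule sum.union_disjoint[OF fin disj])
  also have "{A \<in> I. e \<in> A} = insert e ` contraction I {e}"
  proof (intro set_eqI iffI)
    fix A assume "A \<in> {A \<in> I. e \<in> A}"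
    then have "A - {e} \<in> contraction I {e}" "A = insert e (A - {e})"
      unfolding contraction_def by (auto simp: insert_absorb)
    then show "A \<in> insert e ` contraction I {e}" by blast
  qed (auto simp: contraction_def)
  also have "(\<Sum>A\<in>insert e ` contraction I {e}. x ^ (d - card A)) = fpoly (contraction I {e}) (d - 1) x"
  proof -
    have "inj_on (insert e) (contraction I {e})" unfolding contraction_def inj_on_def by blast
    moreover have "card (insert e A) = Suc (card A)" if "A \<in> contraction I {e}" for A
    proof -
      from that have "insert e A \<in> I" "e \<notin> A" unfolding contraction_def by auto
      moreover from this have "finite A" using I fE by (meson PowD finite_insert finite_subset subsetD)
      ultimately show ?thesis by simp
    qed
    ultimately show ?thesis unfolding fpoly_def by (simp add: sum.reindex)
  qed
  finally show ?thesis .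
qed

lemma fpoly_coloop:
  assumes fE: "finite E" and I: "I \<subseteq> Pow E"
    and down: "\<And>A B. A \<in> I \<Longrightarrow> B \<subseteq> A \<Longrightarrow> B \<in> I"
    and card: "\<And>A. A \<in> I \<Longrightarrow> card A \<le> d"
    and free: "\<And>A. A \<in> I \<Longrightarrow> f \<notin> A \<Longrightarrow> insert f A \<in> I"
  shows "fpoly I d x = (x + 1) * fpoly (deletion I f) (d - 1) x"
proof -
  have "contraction I {f} = deletion I f"
    unfolding contraction_def deletion_def using down free by auto
  moreover have "fpoly (deletion I f) d x = x * fpoly (deletion I f) (d - 1) x"
    unfolding fpoly_def sum_distrib_left
  proof (rule sum.cong[OF refl])
    fix A assume "A \<in> deletion I f"
    then have A: "A \<in> I" "f \<notin> A" unfolding deletion_def by auto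
    then have "card (insert f A) \<le> d" using card free by blast
    moreover have "finite A" using A I fE by (meson PowD finite_subset subsetD)
    ultimately have "d - card A = Suc (d - 1 - card A)" using A(2) by simp
    then show "x ^ (d - card A) = x * x ^ (d - 1 - card A)" by simp
  qed
  ultimately show ?thesis
    using fpoly_deletion_contraction[OF fE I, of d x f] by (simp add: algebra_simps)
qed

lemma fpoly_series_pair:
  assumes m: "matroid E I" and e: "e \<in> E" "\<not> coloop E I e" and f: "\<not> coloop E I f"
    and f_coloop: "coloop (E - {e}) (deletion I e) f"
  shows "fpoly I (mrank I) x = (x + 2) * fpoly (deletion (deletion I e) f) (mrank I - 1) x
           + fpoly (contraction I {e, f}) (mrank I - 2) x"
proof -
  define d where "d = mrank I"
  define D where "D = deletion I e"
  have mD: "matroid (E - {e}) D" unfolding D_def by (rule matroid_deletion[OF m])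
  have rD: "mrank D = d" unfolding D_def d_def by (rule mrank_deletion[OF m e])
  have "coloop (E - {e}) D f" using f_coloop unfolding D_def .
  then have fE: "f \<in> E" "f \<noteq> e" and f_in_bases: "\<And>B. B \<in> D \<Longrightarrow> card B = d \<Longrightarrow> f \<in> B"
    unfolding coloop_iff[OF mD] rD by auto
  obtain B0 where B0: "B0 \<in> I" "card B0 = d" "e \<notin> B0"
    using e unfolding coloop_iff[OF m] d_def by blast
  obtain B1 where B1: "B1 \<in> I" "card B1 = d" "f \<notin> B1"
    using f fE unfolding coloop_iff[OF m] d_def by blast
  have f_free: "insert f A \<in> D" if A: "A \<in> D" "f \<notin> A" for A
  proof -
    from A have "A \<in> I" "e \<notin> A" unfolding D_def deletion_def by auto
    then obtain B where B: "B \<in> I" "A \<subseteq> B" "B \<subseteq> A \<union> B0" "card B = d"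
      using indep_extend_to_max_within[OF m B0(1)] B0(2) unfolding d_def by blast
    with B0 \<open>e \<notin> A\<close> have "B \<in> D" unfolding D_def deletion_def by blast
    with B have "insert f A \<subseteq> B" using f_in_bases by blast
    with B \<open>e \<notin> A\<close> fE show ?thesis
      using matroid_subset_indep[OF m] unfolding D_def deletion_def by blast
  qed
  have series: "insert e A \<in> I" if A: "A \<in> I" "e \<notin> A" "f \<notin> A" for A
  proof -
    obtain B where B: "B \<in> I" "A \<subseteq> B" "B \<subseteq> A \<union> B1" "card B = d"
      using indep_extend_to_max_within[OF m B1(1) _ A(1)] B1(2) unfolding d_def by blast
    with A B1 have "f \<notin> B" by blast
    with B f_in_bases have "e \<in> B" unfolding D_def deletion_def by blast
    with B show ?thesis using matroid_subset_indep[OF m] by blast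
  qed
  have "fpoly D d x = (x + 1) * fpoly (deletion D f) (d - 1) x"
  proof (rule fpoly_coloop[OF matroid_finite_ground[OF mD] matroid_indeps_subset_Pow[OF mD]])
    show "\<And>A B. A \<in> D \<Longrightarrow> B \<subseteq> A \<Longrightarrow> B \<in> D" using matroid_subset_indep[OF mD] .
    show "\<And>A. A \<in> D \<Longrightarrow> card A \<le> d" using card_le_mrank[OF mD] rD by simp
    show "\<And>A. A \<in> D \<Longrightarrow> f \<notin> A \<Longrightarrow> insert f A \<in> D" using f_free .
  qed
  moreover have "deletion (contraction I {e}) f = deletion D f"
  proof (intro set_eqI iffI)
    fix A assume "A \<in> deletion (contraction I {e}) f"
    then have "insert e A \<in> I" "e \<notin> A" "f \<notin> A" unfolding deletion_def contraction_def by auto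
    then show "A \<in> deletion D f"
      using matroid_subset_indep[OF m] unfolding D_def deletion_def by blast
  next
    fix A assume "A \<in> deletion D f"
    then have "A \<in> I" "e \<notin> A" "f \<notin> A" unfolding D_def deletion_def by auto
    then show "A \<in> deletion (contraction I {e}) f"
      using series unfolding deletion_def contraction_def by auto
  qed
  moreover have "contraction (contraction I {e}) {f} = contraction I {e, f}"
    unfolding contraction_def using fE(2) by (auto simp: insert_commute)
  moreover have "fpoly (contraction I {e}) (d - 1) x
      = fpoly (deletion (contraction I {e}) f) (d - 1) x
        + fpoly (contraction (contraction I {e}) {f}) (d - 1 - 1) x"
    using matroid_finite_ground[OF m] contraction_subset_Pow[OF matroid_indeps_subset_Pow[OF m]]
    by (intro fpoly_deletion_contraction) auto
  ultimately show ?thesis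
    using fpoly_deletion_contraction[OF matroid_finite_ground[OF m] matroid_indeps_subset_Pow[OF m],
        of d x e]
    unfolding d_def D_def by (simp add: algebra_simps numeral_2_eq_2)
qed

lemma fpoly_neg2_nonneg:
  assumes "matroid E I" and "\<forall>e\<in>E. \<not> coloop E I e"
  shows "0 \<le> fpoly I (mrank I) (-2)"
  using assms
proof (induction "card E" arbitrary: E I rule: less_induct)
  case less
  note m = less.prems(1) and no_coloop = less.prems(2)
  have contract: "0 \<le> fpoly (contraction I X) (mrank I - card X) (-2)"
    if X: "X \<noteq> {}" "X \<subseteq> E" for X
  proof (cases "X \<in> I")
    case True
    have "card (E - X) < card E"
      using X matroid_finite_ground[OF m] by (intro psubset_card_mono) auto
    from less.hyps[OF this matroid_contraction[OF m True] contraction_no_coloop[OF m True no_coloop]]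
    show ?thesis by (simp add: mrank_contraction[OF m True])
  next
    case False
    then show ?thesis by (simp add: contraction_not_indep[OF m] fpoly_def)
  qed
  show ?case
  proof (cases "mrank I = 0")
    case True
    then show ?thesis by (simp add: fpoly_def)
  next
    case False
    obtain B where "B \<in> I" "card B = mrank I" using mrank_attained[OF m] by blast
    with False obtain e where "e \<in> B" by fastforce
    with \<open>B \<in> I\<close> have e: "e \<in> E" "\<not> coloop E I e"
      using matroid_indeps_subset_Pow[OF m] no_coloop by auto
    show ?thesis
    proof (cases "\<exists>f. coloop (E - {e}) (deletion I e) f")
      case True
      then obtain f where f: "coloop (E - {e}) (deletion I e) f" by blast
      then have f_mem: "f \<in> E" "f \<noteq> e" unfolding coloop_def by auto
      have "fpoly I (mrank I) (-2) = fpoly (contraction I {e, f}) (mrank I - card {e, f}) (-2)"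
        using fpoly_series_pair[OF m e, of f "-2"] no_coloop f f_mem by (simp add: numeral_2_eq_2)
      also have "0 \<le> \<dots>" using contract[of "{e, f}"] e f_mem by simp
      finally show ?thesis .
    next
      case False
      have "card (E - {e}) < card E" using e matroid_finite_ground[OF m] by (intro card_Diff1_less)
      from less.hyps[OF this matroid_deletion[OF m]] False
      have "0 \<le> fpoly (deletion I e) (mrank I) (-2)" by (simp add: mrank_deletion[OF m e])
      moreover have "0 \<le> fpoly (contraction I {e}) (mrank I - 1) (-2)" using contract[of "{e}"] e by simp
      ultimately show ?thesis
        using fpoly_deletion_contraction[OF matroid_finite_ground[OF m] matroid_indeps_subset_Pow[OF m],
            of "mrank I" "-2" e]
        by simp
    qed
  qed
qed

lemma sum_fvec:
  fixes g :: "nat \<Rightarrow> int"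
  assumes "finite I" and "\<And>A. A \<in> I \<Longrightarrow> card A \<le> d"
  shows "(\<Sum>i\<le>d. g i * int (fvec I i)) = (\<Sum>A\<in>I. g (card A))"
proof -
  have "(\<Sum>A\<in>I. g (card A)) = (\<Sum>i\<le>d. \<Sum>A | A \<in> I \<and> card A = i. g (card A))"
    using assms by (intro sum.group[symmetric]) auto
  also have "\<dots> = (\<Sum>i\<le>d. g i * int (fvec I i))"
    by (simp add: fvec_def mult.commute)
  finally show ?thesis ..
qed

lemma sum_indep_supersets:
  assumes m: "matroid E I" and X: "X \<in> I"
  shows "(\<Sum>A | A \<in> I \<and> X \<subseteq> A. x ^ (d - card A)) = fpoly (contraction I X) (d - card X) x"
proof -
  have "{A \<in> I. X \<subseteq> A} = (\<lambda>A. A \<union> X) ` contraction I X"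
  proof (intro set_eqI iffI)
    fix A assume "A \<in> {A \<in> I. X \<subseteq> A}"
    then have "A - X \<in> contraction I X" "A = (A - X) \<union> X"
      by (auto intro: Diff_mem_contraction)
    then show "A \<in> (\<lambda>A. A \<union> X) ` contraction I X" by blast
  qed (auto simp: contraction_def)
  moreover have "inj_on (\<lambda>A. A \<union> X) (contraction I X)"
    unfolding contraction_def inj_on_def by blast
  ultimately show ?thesis
    unfolding fpoly_def by (simp add: sum.reindex card_Un_contraction[OF m] add.commute)
qed

lemma binomial_fvec_sum:
  assumes m: "matroid E I"
  shows "(\<Sum>i = k..mrank I. int (i choose k) * x ^ (mrank I - i) * int (fvec I i))
       = (\<Sum>X | X \<in> I \<and> card X = k. fpoly (contraction I X) (mrank I - k) x)"
proof -
  define d where "d = mrank I"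
  define K where "K = {X \<in> I. card X = k}"
  have fI: "finite I" using matroid_finite_indeps[OF m] .
  have "(\<Sum>i = k..d. int (i choose k) * x ^ (d - i) * int (fvec I i))
      = (\<Sum>i\<le>d. int (i choose k) * x ^ (d - i) * int (fvec I i))"
    by (rule sum.mono_neutral_left) auto
  also have "\<dots> = (\<Sum>A\<in>I. int (card A choose k) * x ^ (d - card A))"
    using sum_fvec[OF fI, of d "\<lambda>i. int (i choose k) * x ^ (d - i)"] card_le_mrank[OF m]
    unfolding d_def by simp
  also have "\<dots> = (\<Sum>A\<in>I. \<Sum>X | X \<in> K \<and> X \<subseteq> A. x ^ (d - card A))"
  proof (rule sum.cong[OF refl])
    fix A assume A: "A \<in> I"
    have "{X. X \<in> K \<and> X \<subseteq> A} = {X. X \<subseteq> A \<and> card X = k}"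
      unfolding K_def using matroid_subset_indep[OF m A] by blast
    with n_subsets[OF matroid_indep_finite[OF m A]]
    show "int (card A choose k) * x ^ (d - card A) = (\<Sum>X | X \<in> K \<and> X \<subseteq> A. x ^ (d - card A))"
      by simp
  qed
  also have "\<dots> = (\<Sum>X\<in>K. \<Sum>A | A \<in> I \<and> X \<subseteq> A. x ^ (d - card A))"
    using sum.swap_restrict[of I K "\<lambda>A X. x ^ (d - card A)" "\<lambda>A X. X \<subseteq> A"] fI
    unfolding K_def by simp
  also have "\<dots> = (\<Sum>X\<in>K. fpoly (contraction I X) (d - k) x)"
    by (rule sum.cong) (auto simp: K_def sum_indep_supersets[OF m])
  finally show ?thesis unfolding d_def K_def .
qed

theorem theorem0p3:
  fixes E :: "'a set" and \<I> :: "'a set set" and d k :: nat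
  assumes "matroid E \<I>"
    and "mrank \<I> = d"
    and "\<forall>e\<in>E. \<not> coloop E \<I> e"
    and "k \<le> d"
  shows "0 \<le> (\<Sum>i = k..d. int (i choose k) * (-2) ^ (d - i) * int (fvec \<I> i))"
proof -
  have "(\<Sum>i = k..d. int (i choose k) * (-2) ^ (d - i) * int (fvec \<I> i))
      = (\<Sum>X | X \<in> \<I> \<and> card X = k. fpoly (contraction \<I> X) (d - k) (-2))"
    using binomial_fvec_sum[OF assms(1)] assms(2) by simp
  also have "0 \<le> \<dots>"
  proof (rule sum_nonneg)
    fix X assume "X \<in> {X. X \<in> \<I> \<and> card X = k}"
    then have X: "X \<in> \<I>" "card X = k" by auto
    have "0 \<le> fpoly (contraction \<I> X) (mrank (contraction \<I> X)) (-2)"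
      using fpoly_neg2_nonneg[OF matroid_contraction contraction_no_coloop] assms(1,3) X(1) by blast
    then show "0 \<le> fpoly (contraction \<I> X) (d - k) (-2)"
      using mrank_contraction[OF assms(1) X(1)] assms(2) X(2) by simp
  qed
  finally show ?thesis .
qed

end
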